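(* Consider the baseline dynamic game described in the context, with standing assumptions (A1)–(A4). For any discount factor $\delta\in[0,1)$ and any $\theta'\in[\underline{\theta},\overline{\theta}]$, in the game where the buyer's type is distributed according to $F_{\theta'}$ (the distribution $F$ conditional on $\theta\in[\underline{\theta},\theta']$), there exists a Perfect Bayesian equilibrium in which the seller offers $(\overline{x},\overline{u}(\underline{\theta}))$ in period $t=0$, all buyer types accept it at $t=0$, and the seller's revenue equals $\overline{u}(\underline{\theta})$.
   Context: Fix $\underline{\theta}<\overline{\theta}$ and $0<\underline{x}<\overline{x}$. A buyer has a private type $\theta\in[\underline{\theta},\overline{\theta}]$ drawn from a CDF $F$ with density $f$. Let $v:[0,\overline{x}]\to\mathbb{R}$ be strictly concave and continuously differentiable with $v(0)=0$ (A1). For $x\in[\underline{x},\overline{x}]$, $u(x,\theta)=\max_{0\le x'\le x}[v(x')+\theta x']$; the seller has zero cost. $x^e(\theta)$ is the unique maximizer of $v(x')+\theta x'$ over $[0,\overline{x}]$. Standing assumptions: (A2) $0<m\le f\le M$ for constants $m,M$, and $\theta-\frac{1-F(\theta)}{f(\theta)}$ is strictly increasing; (A3) $0<x^e(\underline{\theta})\le\underline{x}$; (A4) $v(x^e(\theta))+\big(\theta-\frac{1-F(\theta)}{f(\theta)}\big)x^e(\theta)\ge0$ for all $\theta$. Define $\overline{u}(\underline{\theta})=v(x^e(\underline{\theta}))+\underline{\theta}x^e(\underline{\theta})$. Dynamic game: discrete time $t=0,1,\dots$, discount factor $\delta$. Each period the seller (possibly randomizing) posts one offer $(x_t,p_t)\in[\underline{x},\overline{x}]\times\mathbb{R}$;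 a buyer who has not yet purchased accepts or waits. Acceptance by type $\theta$ at $t$ gives the buyer $\delta^t(u(x_t,\theta)-p_t)$ and the seller $\delta^tp_t$, ending the game for that buyer; no purchase gives $0$. Histories record past offers and decisions; seller strategies map histories to distributions over offers; buyer strategies map (history, current offer, type) to accept/wait, measurable in type. Equilibrium means Perfect Bayesian equilibrium (sequential rationality given beliefs over remaining types; Bayes' rule wherever possible). *)

theory Defs
  imports "HOL-Probability.Probability"
begin

definition strictly_concave_on :: "real set \<Rightarrow> (real \<Rightarrow> real) \<Rightarrow> bool" where
  "strictly_concave_on S g \<longleftrightarrow>
     (\<forall>x\<in>S. \<forall>y\<in>S. x \<noteq> y \<longrightarrow>
        (\<forall>t::real. 0 < t \<and> t < 1 \<longrightarrow> (1 - t) * g x + t * g y < g ((1 - t) * x + t * y)))"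

definition C1_on_interval :: "(real \<Rightarrow> real) \<Rightarrow> real \<Rightarrow> real \<Rightarrow> bool" where
  "C1_on_interval g a b \<longleftrightarrow>
     (\<exists>D. (\<forall>x\<in>{a..b}. (g has_real_derivative D x) (at x within {a..b})) \<and> continuous_on {a..b} D)"

definition u_fun :: "(real \<Rightarrow> real) \<Rightarrow> real \<Rightarrow> real \<Rightarrow> real" where
  "u_fun v x \<theta> = (SUP x'\<in>{0..x}. v x' + \<theta> * x')"

definition xe :: "(real \<Rightarrow> real) \<Rightarrow> real \<Rightarrow> real \<Rightarrow> real" where
  "xe v xbar \<theta> = (THE x. x \<in> {0..xbar} \<and> (\<forall>y\<in>{0..xbar}. v y + \<theta> * y \<le> v x + \<theta> * x))"

definition ubar :: "(real \<Rightarrow> real) \<Rightarrow> real \<Rightarrow> real \<Rightarrow> real" where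
  "ubar v xbar \<theta>l = v (xe v xbar \<theta>l) + \<theta>l * xe v xbar \<theta>l"

text \<open>For theta' = theta_l this
  conditioning event is null; F_{theta_l} is read as the point mass at theta_l.\<close>
definition type_dist :: "real \<Rightarrow> real \<Rightarrow> (real \<Rightarrow> real) \<Rightarrow> real measure" where
  "type_dist \<theta>l \<theta>h f = density lborel (\<lambda>\<theta>. ennreal (indicator {\<theta>l..\<theta>h} \<theta> * f \<theta>))"

definition cond_type_dist :: "real \<Rightarrow> real \<Rightarrow> (real \<Rightarrow> real) \<Rightarrow> real \<Rightarrow> real measure" where
  "cond_type_dist \<theta>l \<theta>h f \<theta>' =
     (if \<theta>' = \<theta>l then return borel \<theta>l
      else uniform_measure (type_dist \<theta>l \<theta>h f) {\<theta>l..\<theta>'})"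

text \<open>An offer is (quantity, price). A (non-terminal) history is the list of past offers,
  all of which were rejected (acceptance ends the game).\<close>
type_synonym offer = "real \<times> real"
type_synonym hist = "offer list"

text \<open>The seller's randomisation is represented by an
  auxiliary draw r_t, i.i.d. uniform on [0,1] in each period, so a behaviour strategy is
  a (jointly measurable) map s(h, r) from the history and the current draw to an offer.\<close>
type_synonym seller_strategy = "hist \<Rightarrow> real \<Rightarrow> offer"
text \<open>Buyer strategies: accept (True) / wait (False) as a function of history,
  current offer and type.\<close>
type_synonym buyer_strategy = "hist \<Rightarrow> offer \<Rightarrow> real \<Rightarrow> bool"

definition rnd :: "(nat \<Rightarrow> real) measure" where
  "rnd = Pi\<^sub>M UNIV (\<lambda>_. uniform_measure lborel {0..1::real})"

definition valid_offer :: "real \<Rightarrow> real \<Rightarrow> offer \<Rightarrow> bool" where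
  "valid_offer xl xh q \<longleftrightarrow> fst q \<in> {xl..xh}"

definition valid_hist :: "real \<Rightarrow> real \<Rightarrow> hist \<Rightarrow> bool" where
  "valid_hist xl xh h \<longleftrightarrow> (\<forall>q\<in>set h. valid_offer xl xh q)"

definition seller_valid :: "real \<Rightarrow> real \<Rightarrow> seller_strategy \<Rightarrow> bool" where
  "seller_valid xl xh s \<longleftrightarrow>
     (\<forall>h r. valid_offer xl xh (s h r)) \<and>
     (\<forall>n. (\<lambda>(g, r). s (map g [0..<n]) r)
            \<in> (Pi\<^sub>M {0..<n} (\<lambda>_. borel) \<Otimes>\<^sub>M borel) \<rightarrow>\<^sub>M (borel :: offer measure))"

text \<open>History reached k periods after the (seller) node h if all offers are rejected,
  using draws omega 0, omega 1, ...\<close>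
fun hst :: "seller_strategy \<Rightarrow> hist \<Rightarrow> (nat \<Rightarrow> real) \<Rightarrow> nat \<Rightarrow> hist" where
  "hst s h \<omega> 0 = h"
| "hst s h \<omega> (Suc k) = hst s h \<omega> k @ [s (hst s h \<omega> k) (\<omega> k)]"

definition bhist :: "seller_strategy \<Rightarrow> hist \<Rightarrow> offer \<Rightarrow> (nat \<Rightarrow> real) \<Rightarrow> nat \<Rightarrow> hist" where
  "bhist s h q \<omega> k = (case k of 0 \<Rightarrow> h | Suc j \<Rightarrow> hst s (h @ [q]) \<omega> j)"

definition boff :: "seller_strategy \<Rightarrow> hist \<Rightarrow> offer \<Rightarrow> (nat \<Rightarrow> real) \<Rightarrow> nat \<Rightarrow> offer" where
  "boff s h q \<omega> k = (case k of 0 \<Rightarrow> q | Suc j \<Rightarrow> s (hst s (h @ [q]) \<omega> j) (\<omega> j))"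

definition disc_first :: "real \<Rightarrow> (nat \<Rightarrow> bool) \<Rightarrow> (nat \<Rightarrow> real) \<Rightarrow> real" where
  "disc_first \<delta> A g = (if \<exists>k. A k then \<delta> ^ (LEAST k. A k) * g (LEAST k. A k) else 0)"

text \<open>Expected continuation payoff (in current-period units) of a buyer of type theta at
  node (h, q) who uses the type-specific plan c, against seller strategy s.\<close>
definition buyer_val ::
  "(real \<Rightarrow> real) \<Rightarrow> real \<Rightarrow> seller_strategy \<Rightarrow> (hist \<Rightarrow> offer \<Rightarrow> bool)
     \<Rightarrow> hist \<Rightarrow> offer \<Rightarrow> real \<Rightarrow> real" where
  "buyer_val v \<delta> s c h q \<theta> =
     (\<integral>\<omega>. disc_first \<delta> (\<lambda>k. c (bhist s h q \<omega> k) (boff s h q \<omega> k))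
              (\<lambda>k. u_fun v (fst (boff s h q \<omega> k)) \<theta> - snd (boff s h q \<omega> k)) \<partial>rnd)"

text \<open>Seller's expected continuation revenue (in current-period units) at seller node h,
  with belief mu over the remaining types, when the seller uses s and the buyer uses b.\<close>
definition seller_val ::
  "real \<Rightarrow> seller_strategy \<Rightarrow> buyer_strategy \<Rightarrow> real measure \<Rightarrow> hist \<Rightarrow> real" where
  "seller_val \<delta> s b \<mu> h =
     (\<integral>\<theta>. (\<integral>\<omega>. disc_first \<delta> (\<lambda>k. b (hst s h \<omega> k) (s (hst s h \<omega> k) (\<omega> k)) \<theta>)
                     (\<lambda>k. snd (s (hst s h \<omega> k) (\<omega> k))) \<partial>rnd) \<partial>\<mu>)"

definition is_PBE ::
  "(real \<Rightarrow> real) \<Rightarrow> real \<Rightarrow> real \<Rightarrow> real \<Rightarrow> real \<Rightarrow> real \<Rightarrow> real measure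
     \<Rightarrow> seller_strategy \<Rightarrow> buyer_strategy \<Rightarrow> (hist \<Rightarrow> real measure) \<Rightarrow> bool" where
  "is_PBE v xl xh \<theta>l \<theta>' \<delta> prior s b \<mu> \<longleftrightarrow>
     seller_valid xl xh s
   \<and> (\<forall>h q. {\<theta>. b h q \<theta>} \<in> sets borel)
   \<and> (\<forall>h. prob_space (\<mu> h) \<and> sets (\<mu> h) = sets borel \<and> emeasure (\<mu> h) {\<theta>l..\<theta>'} = 1)
   \<and> \<mu> [] = prior
   \<and> (\<forall>h q. valid_hist xl xh h \<longrightarrow> valid_offer xl xh q \<longrightarrow>
          emeasure (\<mu> h) {\<theta>. \<not> b h q \<theta>} \<noteq> 0 \<longrightarrow>
          \<mu> (h @ [q]) = uniform_measure (\<mu> h) {\<theta>. \<not> b h q \<theta>})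
   \<and> (\<forall>h q \<theta> c. valid_hist xl xh h \<longrightarrow> valid_offer xl xh q \<longrightarrow> \<theta> \<in> {\<theta>l..\<theta>'} \<longrightarrow>
          buyer_val v \<delta> s c h q \<theta> \<le> buyer_val v \<delta> s (\<lambda>h' q'. b h' q' \<theta>) h q \<theta>)
   \<and> (\<forall>h s'. valid_hist xl xh h \<longrightarrow> seller_valid xl xh s' \<longrightarrow>
          seller_val \<delta> s' b (\<mu> h) h \<le> seller_val \<delta> s b (\<mu> h) h)"

end

theory Submission
  imports Defs
begin

(*
  The seller posts the price ub = u(xh, \<theta>l) in every period, repeating the last quantity
  offered, and a type accepts (x, p) iff p - \<delta> ub \<le> (1 - \<delta>) u(x, \<theta>), i.e. iff buying now is
  no worse than buying at price ub tomorrow. Since every quantity in [xl, xh] gives every type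
  utility at least ub (A3), all types accept at t = 0 and the buyer's rule is a best reply.

  Beliefs are the prior conditioned on rejections, hence on sets of types that are closed
  downwards. The key invariant is that for such a belief \<nu>, every down-closed set L and every
  price c > 0 one has c \<nu>(L \<inter> {u(xh, \<cdot>) \<ge> c}) \<le> ub \<nu>(L): no posted price for the efficient
  bundle beats ub. For the prior this is (A4), which makes \<tau> \<mapsto> u(xh, \<tau>) (F s - F \<tau>)
  nonincreasing. The invariant bounds the revenue of any single period of a deviation by
  ub times the mass present minus \<delta> ub times the mass that remains, so telescoping bounds
  every deterministic sequence of offers by ub, and Fubini extends this to randomised ones.
*)

lemma disc_first_0: "A 0 \<Longrightarrow> disc_first \<delta> A g = g 0"
  unfolding disc_first_def by auto

lemma disc_first_1:
  assumes "\<not> A 0" "A 1"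
  shows "disc_first \<delta> A g = \<delta> * g 1"
proof -
  have "(LEAST k. A k) = 1"
    using assms by (intro Least_equality) (auto simp: Suc_le_eq intro: gr0I)
  then show ?thesis
    unfolding disc_first_def using assms by auto
qed

lemma disc_first_le_max:
  assumes "0 \<le> \<delta>" "\<delta> \<le> 1" "\<And>j. g (Suc j) = b" "0 \<le> b"
  shows "disc_first \<delta> A g \<le> max (g 0) (\<delta> * b)"
proof (cases "\<exists>k. A k")
  case True
  define n where "n = (LEAST k. A k)"
  have "\<delta> ^ n * g n \<le> max (g 0) (\<delta> * b)"
  proof (cases n)
    case (Suc j)
    have "\<delta> ^ n * g n = \<delta> ^ j * (\<delta> * b)"
      using Suc assms(3) by simp
    also have "\<dots> \<le> \<delta> * b"
      using assms by (intro mult_left_le_one_le) (auto simp: power_le_one)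
    finally show ?thesis
      by simp
  qed simp
  then show ?thesis
    unfolding disc_first_def n_def using True by simp
next
  case False
  then show ?thesis
    unfolding disc_first_def using assms by (auto simp: le_max_iff_disj)
qed

lemma max_disc_first_le:
  assumes "0 \<le> \<delta>" "\<delta> \<le> 1" "0 \<le> B" "\<And>k. A k \<Longrightarrow> g k \<le> B"
  shows "max 0 (disc_first \<delta> A g) \<le> B"
proof (cases "\<exists>k. A k")
  case True
  define n where "n = (LEAST k. A k)"
  have "A n"
    unfolding n_def using True by (rule LeastI_ex)
  have "0 \<le> \<delta> ^ n" "\<delta> ^ n \<le> 1"
    using assms by (auto simp: power_le_one)
  then have "\<delta> ^ n * g n \<le> max 0 (g n)"
    by (cases "0 \<le> g n") (auto simp: mult_left_le_one_le mult_nonneg_nonpos)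
  also have "\<dots> \<le> B"
    using \<open>A n\<close> assms by simp
  finally have "\<delta> ^ n * g n \<le> B" .
  then show ?thesis
    unfolding disc_first_def n_def using True assms(3) by simp
next
  case False
  then show ?thesis
    unfolding disc_first_def using assms(3) by auto
qed

lemma ennreal_max_disc_first:
  assumes "0 \<le> \<delta>"
  shows "ennreal (max 0 (disc_first \<delta> A g)) =
           (\<Sum>k. if A k \<and> (\<forall>j<k. \<not> A j) then ennreal (\<delta> ^ k * max 0 (g k)) else 0)"
proof (cases "\<exists>k. A k")
  case True
  define n where "n = (LEAST k. A k)"
  have first: "A k \<and> (\<forall>j<k. \<not> A j) \<longleftrightarrow> k = n" for k
  proof
    assume "A k \<and> (\<forall>j<k. \<not> A j)"
    then show "k = n"
      unfolding n_def by (intro Least_equality[symmetric]) (auto simp flip: not_less)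
  next
    assume "k = n"
    then show "A k \<and> (\<forall>j<k. \<not> A j)"
      unfolding n_def using LeastI_ex[OF True] not_less_Least by blast
  qed
  have "max 0 (\<delta> ^ n * g n) = \<delta> ^ n * max 0 (g n)"
    using assms by (simp add: max_mult_distrib_left)
  then have "ennreal (max 0 (disc_first \<delta> A g)) = ennreal (\<delta> ^ n * max 0 (g n))"
    unfolding disc_first_def n_def using True by simp
  also have "\<dots> = (\<Sum>k. if k = n then ennreal (\<delta> ^ k * max 0 (g k)) else 0)"
    by (rule sums_unique[OF sums_single])
  finally show ?thesis
    unfolding first .
next
  case False
  then show ?thesis
    unfolding disc_first_def by auto
qed

lemma borel_measurable_disc_first:
  assumes "\<And>k. Measurable.pred M (P k)" "\<And>k. G k \<in> borel_measurable M"
  shows "(\<lambda>z. disc_first \<delta> (\<lambda>k. P k z) (\<lambda>k. G k z)) \<in> borel_measurable M"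
proof -
  have first: "(\<lambda>z. LEAST k. P k z) \<in> M \<rightarrow>\<^sub>M count_space UNIV"
    by (rule measurable_Least) (use assms in \<open>simp add: pred_def\<close>)
  have "(\<lambda>z. \<delta> ^ (LEAST k. P k z) * G (LEAST k. P k z) z) \<in> borel_measurable M"
    by (rule measurable_compose_countable'[where f="\<lambda>i z. \<delta> ^ i * G i z" and I=UNIV, OF _ first])
       (use assms in auto)
  moreover have "Measurable.pred M (\<lambda>z. \<exists>k. P k z)"
    using assms by measurable
  ultimately show ?thesis
    unfolding disc_first_def by measurable
qed

lemma discounted_sum_le_if_budget:
  fixes w r :: "nat \<Rightarrow> real"
  assumes budget: "\<And>k. w k + \<delta> * B * r (Suc k) \<le> B * r k"
    and "r 0 = 1" "\<And>k. 0 \<le> r k" "0 \<le> \<delta>" "0 \<le> B"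
  shows "(\<Sum>k<n. \<delta> ^ k * w k) \<le> B"
proof -
  have "(\<Sum>k<n. \<delta> ^ k * w k) + \<delta> ^ n * B * r n \<le> B"
  proof (induction n)
    case 0
    then show ?case
      using \<open>r 0 = 1\<close> by simp
  next
    case (Suc n)
    have "\<delta> ^ n * (w n + \<delta> * B * r (Suc n)) \<le> \<delta> ^ n * (B * r n)"
      using budget[of n] \<open>0 \<le> \<delta>\<close> by (intro mult_left_mono) auto
    with Suc show ?case
      by (simp add: algebra_simps)
  qed
  moreover have "0 \<le> \<delta> ^ n * B * r n"
    using assms by simp
  ultimately show ?thesis
    by linarith
qed

lemma prob_space_rnd: "prob_space rnd"
  unfolding rnd_def by (intro prob_space_PiM prob_space_uniform_measure) auto

lemma measurable_rnd_component[measurable]: "(\<lambda>\<omega>. \<omega> k) \<in> borel_measurable rnd"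
proof -
  have "(\<lambda>\<omega>. \<omega> k) \<in> rnd \<rightarrow>\<^sub>M uniform_measure lborel {0..1::real}"
    unfolding rnd_def by (rule measurable_component_singleton) simp
  then show ?thesis
    by (simp cong: measurable_cong_sets)
qed

lemma measure_rnd_space[simp]: "measure rnd (space rnd) = 1"
  using prob_space.prob_space[OF prob_space_rnd] .

lemma measurable_offer_components:
  assumes "q \<in> N \<rightarrow>\<^sub>M (borel :: offer measure)"
  shows "(\<lambda>z. fst (q z)) \<in> borel_measurable N" "(\<lambda>z. snd (q z)) \<in> borel_measurable N"
  using assms unfolding borel_prod[symmetric] by (auto intro: measurable_fst' measurable_snd')

lemma hst_conv_map: "hst s h \<omega> k = h @ map (\<lambda>j. s (hst s h \<omega> j) (\<omega> j)) [0..<k]"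
  by (induction k) auto

lemma length_hst: "length (hst s h \<omega> k) = length h + k"
  by (induction k) auto

lemma measurable_hst_offer:
  assumes "seller_valid xl xh s"
  shows "(\<lambda>\<omega>. s (hst s h \<omega> k) (\<omega> k)) \<in> rnd \<rightarrow>\<^sub>M (borel :: offer measure)"
proof (induction k rule: less_induct)
  case (less k)
  define n where "n = length h + k"
  let ?H = "Pi\<^sub>M {0..<n} (\<lambda>_. borel :: offer measure)"
  have s_meas: "(\<lambda>(g, r). s (map g [0..<n]) r) \<in> ?H \<Otimes>\<^sub>M borel \<rightarrow>\<^sub>M borel"
    using assms unfolding seller_valid_def by blast
  have entry: "(\<lambda>\<omega>. hst s h \<omega> k ! i) \<in> rnd \<rightarrow>\<^sub>M borel" if "i \<in> {0..<n}" for i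
  proof (cases "i < length h")
    case True
    then have "(\<lambda>\<omega>. hst s h \<omega> k ! i) = (\<lambda>\<omega>. h ! i)"
      by (simp add: hst_conv_map[of s h _ k] nth_append)
    then show ?thesis
      by simp
  next
    case False
    with that have j: "i - length h < k"
      unfolding n_def by auto
    with False
    have "(\<lambda>\<omega>. hst s h \<omega> k ! i) = (\<lambda>\<omega>. s (hst s h \<omega> (i - length h)) (\<omega> (i - length h)))"
      by (simp add: hst_conv_map[of s h _ k] nth_append)
    then show ?thesis
      using less.IH[OF j] by simp
  qed
  define H where "H \<omega> = (\<lambda>i\<in>{0..<n}. hst s h \<omega> k ! i)" for \<omega>
  have "H \<in> rnd \<rightarrow>\<^sub>M ?H"
    unfolding H_def by (rule measurable_restrict) (rule entry)
  then have "(\<lambda>\<omega>. (H \<omega>, \<omega> k)) \<in> rnd \<rightarrow>\<^sub>M ?H \<Otimes>\<^sub>M borel"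
    by (intro measurable_Pair) auto
  from measurable_comp[OF this s_meas]
  have "(\<lambda>\<omega>. s (map (H \<omega>) [0..<n]) (\<omega> k)) \<in> rnd \<rightarrow>\<^sub>M borel"
    by (simp add: comp_def)
  moreover have "map (H \<omega>) [0..<n] = hst s h \<omega> k" for \<omega>
  proof -
    have "map (H \<omega>) [0..<n] = map (\<lambda>i. hst s h \<omega> k ! i) [0..<n]"
      unfolding H_def by (intro map_cong) auto
    also have "\<dots> = hst s h \<omega> k"
      using length_hst[of s h \<omega> k] unfolding n_def by (metis map_nth)
    finally show ?thesis .
  qed
  ultimately show ?case
    by simp
qed

lemma integral_le_integrable_majorant:
  fixes f g :: "'a \<Rightarrow> real"
  assumes "integrable M g" "\<And>x. x \<in> space M \<Longrightarrow> f x \<le> g x" "\<And>x. x \<in> space M \<Longrightarrow> 0 \<le> g x"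
  shows "integral\<^sup>L M f \<le> integral\<^sup>L M g"
proof (cases "integrable M f")
  case True
  then show ?thesis
    using assms by (intro integral_mono)
next
  case False
  then show ?thesis
    using assms by (simp add: not_integrable_integral_eq integral_nonneg)
qed

lemma integral_le_of_nn_integral_le:
  fixes f :: "'a \<Rightarrow> real"
  assumes "f \<in> borel_measurable M" "\<And>x. 0 \<le> f x" "(\<integral>\<^sup>+ x. ennreal (f x) \<partial>M) \<le> ennreal c" "0 \<le> c"
  shows "integral\<^sup>L M f \<le> c"
  using assms by (simp add: integral_eq_nn_integral enn2real_leI)

text \<open>Only the positive part of \<open>\<Phi>\<close> is assumed bounded: the inner integral may be
  a non-integrable junk value, which is then \<open>0\<close>.\<close>
lemma (in pair_prob_space) integral_integral_le:
  fixes \<Phi> :: "'a \<Rightarrow> 'b \<Rightarrow> real"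
  assumes meas: "case_prod \<Phi> \<in> borel_measurable (M1 \<Otimes>\<^sub>M M2)"
    and bounded: "\<And>x y. max 0 (\<Phi> x y) \<le> B"
    and sections: "\<And>y. y \<in> space M2 \<Longrightarrow> (\<integral>x. max 0 (\<Phi> x y) \<partial>M1) \<le> C" and "0 \<le> C"
  shows "(\<integral>x. (\<integral>y. \<Phi> x y \<partial>M2) \<partial>M1) \<le> C"
proof -
  define \<Phi>p where "\<Phi>p x y = max 0 (\<Phi> x y)" for x y
  have "0 \<le> B" and \<Phi>_le: "\<Phi> x y \<le> B" for x y
    using bounded by (meson max.boundedE)+
  have "case_prod \<Phi>p = (\<lambda>z. max 0 (case_prod \<Phi> z))"
    by (simp add: \<Phi>p_def fun_eq_iff split: prod.split)
  then have \<Phi>p_meas: "case_prod \<Phi>p \<in> borel_measurable (M1 \<Otimes>\<^sub>M M2)"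
    using meas by simp
  have \<Phi>p_int: "integrable (M1 \<Otimes>\<^sub>M M2) (case_prod \<Phi>p)"
    by (rule P.integrable_const_bound[where B=B, OF _ \<Phi>p_meas])
      (use \<open>0 \<le> B\<close> \<Phi>_le in \<open>auto simp: \<Phi>p_def split: prod.split\<close>)
  have "integrable M2 (\<Phi>p x)" if "x \<in> space M1" for x
  proof (rule M2.integrable_const_bound[where B=B])
    show "\<Phi>p x \<in> borel_measurable M2"
      using measurable_Pair2[OF \<Phi>p_meas that] by simp
  qed (use \<open>0 \<le> B\<close> \<Phi>_le in \<open>auto simp: \<Phi>p_def\<close>)
  then have "(\<integral>x. (\<integral>y. \<Phi> x y \<partial>M2) \<partial>M1) \<le> (\<integral>x. (\<integral>y. \<Phi>p x y \<partial>M2) \<partial>M1)"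
    using integrable_fst'[OF \<Phi>p_int]
    by (intro integral_le_integrable_majorant integral_le_integrable_majorant integral_nonneg)
      (auto simp: \<Phi>p_def[abs_def])
  also have "\<dots> = (\<integral>y. (\<integral>x. \<Phi>p x y \<partial>M1) \<partial>M2)"
    by (rule Fubini_integral[OF \<Phi>p_int, symmetric])
  also have "\<dots> \<le> (\<integral>y. C \<partial>M2)"
    using sections \<open>0 \<le> C\<close> by (intro integral_le_integrable_majorant) (auto simp: \<Phi>p_def)
  finally show ?thesis
    by (simp add: M2.prob_space)
qed

section \<open>Efficient quantities and indirect utility\<close>

lemma C1_on_interval_imp_continuous_on: "C1_on_interval g a b \<Longrightarrow> continuous_on {a..b} g"
  unfolding C1_on_interval_def by (blast intro: DERIV_continuous_on)

locale concave_valuation =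
  fixes v :: "real \<Rightarrow> real" and xh :: real
  assumes xh_pos: "0 < xh"
    and strictly_concave: "strictly_concave_on {0..xh} v"
    and continuous: "continuous_on {0..xh} v"
begin

abbreviation x\<^sub>e :: "real \<Rightarrow> real" where
  "x\<^sub>e \<equiv> xe v xh"

lemma surplus_strictly_concave:
  assumes "x \<in> {0..xh}" "y \<in> {0..xh}" "x \<noteq> y" "0 < t" "t < 1"
  shows "(1 - t) * (v x + \<theta> * x) + t * (v y + \<theta> * y)
           < v ((1 - t) * x + t * y) + \<theta> * ((1 - t) * x + t * y)"
proof -
  have "(1 - t) * v x + t * v y < v ((1 - t) * x + t * y)"
    using strictly_concave assms unfolding strictly_concave_on_def by blast
  then show ?thesis
    by (simp add: algebra_simps)
qed

lemma surplus_maximiser_unique: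
  assumes x: "x \<in> {0..xh}" "\<forall>z\<in>{0..xh}. v z + \<theta> * z \<le> v x + \<theta> * x"
    and y: "y \<in> {0..xh}" "\<forall>z\<in>{0..xh}. v z + \<theta> * z \<le> v y + \<theta> * y"
  shows "x = y"
proof (rule ccontr)
  assume "x \<noteq> y"
  define z where "z = (1 - 1/2) * x + (1/2) * y"
  define sx sy sz where "sx = v x + \<theta> * x" and "sy = v y + \<theta> * y" and "sz = v z + \<theta> * z"
  have "sx / 2 + sy / 2 < sz"
    using surplus_strictly_concave[OF x(1) y(1) \<open>x \<noteq> y\<close>, of "1/2" \<theta>]
    unfolding sx_def sy_def sz_def z_def by simp
  moreover have "z \<in> {0..xh}"
    using x y unfolding z_def by auto
  then have "sz \<le> sx"
    using x unfolding sz_def sx_def by blast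
  moreover have "sx = sy"
    using x y unfolding sx_def sy_def by (meson order_antisym)
  ultimately show False
    by linarith
qed

lemma xe_maximises: "x\<^sub>e \<theta> \<in> {0..xh} \<and> (\<forall>y\<in>{0..xh}. v y + \<theta> * y \<le> v (x\<^sub>e \<theta>) + \<theta> * x\<^sub>e \<theta>)"
proof -
  have "continuous_on {0..xh} (\<lambda>y. v y + \<theta> * y)"
    by (intro continuous_intros continuous)
  then have "\<exists>x\<in>{0..xh}. \<forall>y\<in>{0..xh}. v y + \<theta> * y \<le> v x + \<theta> * x"
    using continuous_attains_sup[of "{0..xh}" "\<lambda>y. v y + \<theta> * y"] xh_pos by auto
  then have "\<exists>!x. x \<in> {0..xh} \<and> (\<forall>y\<in>{0..xh}. v y + \<theta> * y \<le> v x + \<theta> * x)"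
    using surplus_maximiser_unique by blast
  then show ?thesis
    unfolding xe_def by (rule theI')
qed

lemma xe_in: "x\<^sub>e \<theta> \<in> {0..xh}"
  using xe_maximises by blast

lemma xe_max: "y \<in> {0..xh} \<Longrightarrow> v y + \<theta> * y \<le> v (x\<^sub>e \<theta>) + \<theta> * x\<^sub>e \<theta>"
  using xe_maximises by blast

lemma xe_mono:
  assumes "\<theta>1 \<le> \<theta>2"
  shows "x\<^sub>e \<theta>1 \<le> x\<^sub>e \<theta>2"
proof (rule ccontr)
  assume "\<not> x\<^sub>e \<theta>1 \<le> x\<^sub>e \<theta>2"
  with assms have "\<theta>1 < \<theta>2"
    by (cases "\<theta>1 = \<theta>2") auto
  have "v (x\<^sub>e \<theta>1) + \<theta>2 * x\<^sub>e \<theta>1 \<le> v (x\<^sub>e \<theta>2) + \<theta>2 * x\<^sub>e \<theta>2"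
    and "v (x\<^sub>e \<theta>2) + \<theta>1 * x\<^sub>e \<theta>2 \<le> v (x\<^sub>e \<theta>1) + \<theta>1 * x\<^sub>e \<theta>1"
    using xe_max xe_in by blast+
  then have "(\<theta>2 - \<theta>1) * (x\<^sub>e \<theta>1 - x\<^sub>e \<theta>2) \<le> 0"
    by (simp add: algebra_simps)
  moreover have "0 < (\<theta>2 - \<theta>1) * (x\<^sub>e \<theta>1 - x\<^sub>e \<theta>2)"
    using \<open>\<theta>1 < \<theta>2\<close> \<open>\<not> x\<^sub>e \<theta>1 \<le> x\<^sub>e \<theta>2\<close> by simp
  ultimately show False
    by linarith
qed

lemma xe_measurable[measurable]: "x\<^sub>e \<in> borel_measurable borel"
  by (rule borel_measurable_mono) (auto simp: mono_def xe_mono)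

lemma surplus_mono_below_xe:
  assumes "0 \<le> y" "y \<le> z" "z \<le> x\<^sub>e \<theta>"
  shows "v y + \<theta> * y \<le> v z + \<theta> * z"
proof (cases "y = z \<or> z = x\<^sub>e \<theta>")
  case True
  then show ?thesis
    using xe_max[of y \<theta>] xe_in[of \<theta>] assms by auto
next
  case False
  then have "y < z" "z < x\<^sub>e \<theta>"
    using assms by auto
  define t where "t = (z - y) / (x\<^sub>e \<theta> - y)"
  have t: "0 < t" "t < 1"
    using \<open>y < z\<close> \<open>z < x\<^sub>e \<theta>\<close> unfolding t_def by (auto simp: divide_simps)
  have "t * (x\<^sub>e \<theta> - y) = z - y"
    using \<open>y < z\<close> \<open>z < x\<^sub>e \<theta>\<close> unfolding t_def by simp
  then have z: "(1 - t) * y + t * x\<^sub>e \<theta> = z"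
    by (simp add: algebra_simps)
  have strict: "(1 - t) * (v y + \<theta> * y) + t * (v (x\<^sub>e \<theta>) + \<theta> * x\<^sub>e \<theta>) < v z + \<theta> * z"
    using surplus_strictly_concave[of y "x\<^sub>e \<theta>" t \<theta>] t z assms xe_in[of \<theta>] False by auto
  have "v y + \<theta> * y = (1 - t) * (v y + \<theta> * y) + t * (v y + \<theta> * y)"
    by (simp add: algebra_simps)
  also have "\<dots> \<le> (1 - t) * (v y + \<theta> * y) + t * (v (x\<^sub>e \<theta>) + \<theta> * x\<^sub>e \<theta>)"
    using xe_max[of y \<theta>] xe_in[of \<theta>] assms t by (simp add: mult_left_mono)
  also have "\<dots> < v z + \<theta> * z"
    by (fact strict)
  finally show ?thesis
    by simp
qed

text \<open>\<open>util\<close> is the closed form of \<^const>\<open>u_fun\<close> on \<open>[0, xh]\<close>; extending \<open>v\<close> by constants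
  outside \<open>[0, xh]\<close> makes it jointly Borel measurable.\<close>
definition v_ext :: "real \<Rightarrow> real" where
  "v_ext z = v (max 0 (min xh z))"

definition util :: "real \<Rightarrow> real \<Rightarrow> real" where
  "util x \<theta> = v_ext (min x (x\<^sub>e \<theta>)) + \<theta> * min x (x\<^sub>e \<theta>)"

lemma v_ext_measurable[measurable]: "v_ext \<in> borel_measurable borel"
proof (rule borel_measurable_continuous_onI)
  have "continuous_on UNIV (\<lambda>z. max 0 (min xh z))"
    by (intro continuous_intros)
  moreover have "range (\<lambda>z. max 0 (min xh z)) \<subseteq> {0..xh}"
    using xh_pos by auto
  ultimately show "continuous_on UNIV v_ext"
    unfolding v_ext_def using continuous_on_compose2[OF continuous] by blast
qed

lemma util_measurable[measurable (raw)]: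
  assumes [measurable]: "a \<in> borel_measurable M" "b \<in> borel_measurable M"
  shows "(\<lambda>z. util (a z) (b z)) \<in> borel_measurable M"
  unfolding util_def by measurable

lemma util_eq:
  assumes "0 \<le> x" "x \<le> xh"
  shows "util x \<theta> = v (min x (x\<^sub>e \<theta>)) + \<theta> * min x (x\<^sub>e \<theta>)"
  using xe_in[of \<theta>] assms by (simp add: util_def v_ext_def)

lemma util_xh: "util xh \<theta> = v (x\<^sub>e \<theta>) + \<theta> * x\<^sub>e \<theta>"
  using util_eq[of xh \<theta>] xe_in[of \<theta>] xh_pos by (simp add: min_absorb2)

lemma surplus_le_util:
  assumes "0 \<le> x" "x \<le> xh" "y \<in> {0..x}"
  shows "v y + \<theta> * y \<le> util x \<theta>"
proof (cases "x\<^sub>e \<theta> \<le> x")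
  case True
  then show ?thesis
    using util_eq[OF assms(1,2)] xe_max[of y \<theta>] assms by (simp add: min_absorb2)
next
  case False
  then show ?thesis
    using util_eq[OF assms(1,2)] surplus_mono_below_xe[of y x \<theta>] assms by (simp add: min_absorb1)
qed

lemma u_fun_eq_util:
  assumes "0 \<le> x" "x \<le> xh"
  shows "u_fun v x \<theta> = util x \<theta>"
  unfolding u_fun_def
proof (rule cSup_eq_maximum)
  show "util x \<theta> \<in> (\<lambda>y. v y + \<theta> * y) ` {0..x}"
    using util_eq[OF assms] xe_in[of \<theta>] assms by auto
  show "z \<le> util x \<theta>" if "z \<in> (\<lambda>y. v y + \<theta> * y) ` {0..x}" for z
    using that surplus_le_util[OF assms] by auto
qed

lemma util_mono:
  assumes "0 \<le> x" "x \<le> xh" "\<theta>1 \<le> \<theta>2"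
  shows "util x \<theta>1 \<le> util x \<theta>2"
proof -
  let ?z = "min x (x\<^sub>e \<theta>1)"
  have "?z \<in> {0..x}"
    using xe_in[of \<theta>1] assms by auto
  then have "v ?z + \<theta>1 * ?z \<le> v ?z + \<theta>2 * ?z"
    using assms(3) by (simp add: mult_right_mono)
  also have "\<dots> \<le> util x \<theta>2"
    using surplus_le_util[OF assms(1,2) \<open>?z \<in> {0..x}\<close>] .
  finally show ?thesis
    using util_eq[OF assms(1,2)] by simp
qed

lemma util_le_util_xh:
  assumes "0 \<le> x" "x \<le> xh"
  shows "util x \<theta> \<le> util xh \<theta>"
  using surplus_le_util[of xh "min x (x\<^sub>e \<theta>)" \<theta>] util_eq[OF assms] xe_in[of \<theta>] assms by auto

lemma util_xh_diff_le: "util xh \<theta>2 - util xh \<theta>1 \<le> (\<theta>2 - \<theta>1) * x\<^sub>e \<theta>2"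
  using surplus_le_util[of xh "x\<^sub>e \<theta>2" \<theta>1] util_xh[of \<theta>2] xe_in[of \<theta>2] xh_pos
  by (simp add: algebra_simps)

lemma util_xh_lipschitz:
  assumes "\<theta>1 \<le> \<theta>2"
  shows "util xh \<theta>2 - util xh \<theta>1 \<le> xh * (\<theta>2 - \<theta>1)"
proof -
  have "(\<theta>2 - \<theta>1) * x\<^sub>e \<theta>2 \<le> (\<theta>2 - \<theta>1) * xh"
    using xe_in[of \<theta>2] assms by (intro mult_left_mono) auto
  then show ?thesis
    using util_xh_diff_le[of \<theta>2 \<theta>1] by (simp add: mult.commute)
qed

lemma continuous_util_xh: "continuous_on UNIV (util xh)"
proof (rule lipschitz_on_continuous_on)
  have "\<bar>util xh \<theta>2 - util xh \<theta>1\<bar> \<le> xh * \<bar>\<theta>2 - \<theta>1\<bar>" if "\<theta>1 \<le> \<theta>2" for \<theta>1 \<theta>2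
    using util_xh_lipschitz[OF that] util_mono[of xh \<theta>1 \<theta>2] that xh_pos by simp
  then have "\<bar>util xh \<theta>2 - util xh \<theta>1\<bar> \<le> xh * \<bar>\<theta>2 - \<theta>1\<bar>" for \<theta>1 \<theta>2
    by (metis abs_minus_commute linorder_le_cases)
  then show "lipschitz_on xh UNIV (util xh)"
    using xh_pos by (intro lipschitz_onI) (auto simp: dist_real_def)
qed

end

locale type_density =
  fixes \<theta>l \<theta>h :: real and f F :: "real \<Rightarrow> real" and m M :: real
  assumes types: "\<theta>l < \<theta>h"
    and f_measurable: "set_borel_measurable borel {\<theta>l..\<theta>h} f"
    and F_integral: "\<forall>\<theta>\<in>{\<theta>l..\<theta>h}. F \<theta> = integral {\<theta>l..\<theta>} f"
    and F_\<theta>h: "F \<theta>h = 1"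
    and m_pos: "0 < m"
    and f_bounds: "\<forall>\<theta>\<in>{\<theta>l..\<theta>h}. m \<le> f \<theta> \<and> f \<theta> \<le> M"
begin

lemma f_pos: "\<theta> \<in> {\<theta>l..\<theta>h} \<Longrightarrow> 0 < f \<theta>"
  using f_bounds m_pos by force

lemma f_lborel_measurable: "(\<lambda>\<theta>. indicator {\<theta>l..\<theta>h} \<theta> * f \<theta>) \<in> borel_measurable lborel"
  using f_measurable unfolding set_borel_measurable_def by (simp cong: measurable_cong_sets)

lemma integrable_f: "integrable lborel (\<lambda>\<theta>. indicator {\<theta>l..\<theta>h} \<theta> * f \<theta>)"
proof (rule Bochner_Integration.integrable_bound[OF _ f_lborel_measurable])
  show "integrable lborel (\<lambda>\<theta>. M * indicator {\<theta>l..\<theta>h} \<theta> :: real)"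
    using types by (intro integrable_mult_right integrable_real_indicator) auto
  show "AE \<theta> in lborel. norm (indicator {\<theta>l..\<theta>h} \<theta> * f \<theta>) \<le> norm (M * indicator {\<theta>l..\<theta>h} \<theta>)"
    using f_bounds f_pos by (intro AE_I2) (force simp: indicator_def abs_of_pos)
qed

lemma f_integrable_on: "f integrable_on {\<theta>l..\<theta>h}"
proof -
  have "(\<lambda>\<theta>. indicator {\<theta>l..\<theta>h} \<theta> * f \<theta>) integrable_on UNIV"
    using integrable_on_lborel[OF integrable_f] by simp
  moreover have "(\<lambda>\<theta>. indicator {\<theta>l..\<theta>h} \<theta> * f \<theta>) = (\<lambda>\<theta>. if \<theta> \<in> {\<theta>l..\<theta>h} then f \<theta> else 0)"
    by (auto simp: indicator_def)
  ultimately show ?thesis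
    by (metis integrable_restrict_UNIV)
qed

lemma F_diff:
  assumes "\<theta>l \<le> a" "a \<le> b" "b \<le> \<theta>h"
  shows "F b - F a = integral {a..b} f"
proof -
  have "integral {\<theta>l..a} f + integral {a..b} f = integral {\<theta>l..b} f"
    using assms integrable_on_subinterval[OF f_integrable_on, of \<theta>l b]
    by (intro Henstock_Kurzweil_Integration.integral_combine) auto
  then show ?thesis
    using F_integral assms by auto
qed

lemma F_diff_lower_bound:
  assumes "\<theta>l \<le> a" "a \<le> b" "b \<le> \<theta>h" "\<And>\<theta>. \<theta> \<in> {a..b} \<Longrightarrow> c \<le> f \<theta>"
  shows "c * (b - a) \<le> F b - F a"
proof -
  have "integral {a..b} (\<lambda>_. c) \<le> integral {a..b} f"
    using assms integrable_on_subinterval[OF f_integrable_on, of a b]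
    by (intro integral_le) auto
  then show ?thesis
    using F_diff[OF assms(1-3)] assms(2) by (simp add: mult.commute)
qed

lemma F_diff_upper_bound:
  assumes "\<theta>l \<le> a" "a \<le> b" "b \<le> \<theta>h" "\<And>\<theta>. \<theta> \<in> {a..b} \<Longrightarrow> f \<theta> \<le> c"
  shows "F b - F a \<le> c * (b - a)"
proof -
  have "integral {a..b} f \<le> integral {a..b} (\<lambda>_. c)"
    using assms integrable_on_subinterval[OF f_integrable_on, of a b]
    by (intro integral_le) auto
  then show ?thesis
    using F_diff[OF assms(1-3)] assms(2) by (simp add: mult.commute)
qed

lemma F_mono: "\<theta>l \<le> a \<Longrightarrow> a \<le> b \<Longrightarrow> b \<le> \<theta>h \<Longrightarrow> F a \<le> F b"
  using F_diff_lower_bound[of a b 0] f_pos by (simp add: less_imp_le)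

lemma F_\<theta>l: "F \<theta>l = 0"
  using F_integral types by auto

lemma F_bounds: "\<theta>l \<le> a \<Longrightarrow> a \<le> \<theta>h \<Longrightarrow> 0 \<le> F a \<and> F a \<le> 1"
  using F_mono[of \<theta>l a] F_mono[of a \<theta>h] F_\<theta>l F_\<theta>h by auto

abbreviation T :: "real measure" where
  "T \<equiv> type_dist \<theta>l \<theta>h f"

lemma sets_T[simp, measurable_cong]: "sets T = sets borel"
  by (simp add: type_dist_def)

lemma emeasure_T_Icc:
  assumes "\<theta>l \<le> a" "a \<le> b" "b \<le> \<theta>h"
  shows "emeasure T {a..b} = ennreal (F b - F a)"
proof -
  have "emeasure T {a..b} = (\<integral>\<^sup>+ \<theta>. ennreal (indicator {\<theta>l..\<theta>h} \<theta> * f \<theta>) * indicator {a..b} \<theta> \<partial>lborel)"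
    unfolding type_dist_def using f_lborel_measurable by (intro emeasure_density) auto
  also have "\<dots> = (\<integral>\<^sup>+ \<theta>. ennreal (f \<theta>) * indicator {a..b} \<theta> \<partial>lborel)"
    using assms by (intro nn_integral_cong) (auto simp: indicator_def)
  also have "\<dots> = ennreal (F b - F a)"
  proof (rule nn_integral_has_integral_lebesgue')
    show "0 \<le> f \<theta>" if "\<theta> \<in> {a..b}" for \<theta>
      using that assms f_pos[of \<theta>] by auto
    show "(f has_integral F b - F a) {a..b}"
      using F_diff[OF assms] integrable_on_subinterval[OF f_integrable_on, of a b] assms
      by (simp add: integrable_integral)
  qed
  finally show ?thesis .
qed

lemma prob_space_T: "prob_space T"
proof
  have "emeasure T UNIV = (\<integral>\<^sup>+ \<theta>. ennreal (indicator {\<theta>l..\<theta>h} \<theta> * f \<theta>) \<partial>lborel)"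
    unfolding type_dist_def using f_lborel_measurable by (simp add: emeasure_density)
  also have "\<dots> = (\<integral>\<^sup>+ \<theta>. ennreal (indicator {\<theta>l..\<theta>h} \<theta> * f \<theta>) * indicator {\<theta>l..\<theta>h} \<theta> \<partial>lborel)"
    by (intro nn_integral_cong) (auto simp: indicator_def)
  also have "\<dots> = emeasure T {\<theta>l..\<theta>h}"
    unfolding type_dist_def using f_lborel_measurable by (simp add: emeasure_density)
  finally have "emeasure T UNIV = emeasure T {\<theta>l..\<theta>h}" .
  then show "emeasure T (space T) = 1"
    using emeasure_T_Icc[of \<theta>l \<theta>h] types F_\<theta>l F_\<theta>h by (simp add: type_dist_def)
qed

lemma measure_T_Icc:
  assumes "\<theta>l \<le> a" "a \<le> b" "b \<le> \<theta>h"
  shows "measure T {a..b} = F b - F a"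
  using emeasure_T_Icc[OF assms] F_mono[OF assms] unfolding measure_def by simp

lemma measure_T_Ico:
  assumes "\<theta>l \<le> a" "a \<le> b" "b \<le> \<theta>h"
  shows "measure T {a..<b} = F b - F a"
proof -
  interpret prob_space T
    by (rule prob_space_T)
  have "emeasure T {b} = 0"
    unfolding type_dist_def using f_lborel_measurable by (simp add: emeasure_density)
  then have "measure T {a..<b} = measure T {a..b}"
    by (intro measure_eq_AE AE_I[of _ _ "{b}"]) auto
  then show ?thesis
    using measure_T_Icc[OF assms] by simp
qed

end

section \<open>Posted prices under (A4)\<close>

lemma nonincreasing_if_increment_bound:
  fixes g h :: "real \<Rightarrow> real"
  assumes "a \<le> b"
    and increment: "\<And>x y. a \<le> x \<Longrightarrow> x \<le> y \<Longrightarrow> y \<le> b \<Longrightarrow>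
                      g y - g x \<le> (y - x) * (h y - h x) + K * (y - x)\<^sup>2"
  shows "g b \<le> g a"
proof -
  define C where "C = (b - a) * (h b - h a) + K * (b - a)\<^sup>2"
  have "g b - g a \<le> C / real n" if "n \<ge> 1" for n :: nat
  proof -
    define \<Delta> where "\<Delta> = (b - a) / real n"
    define p where "p i = a + real i * \<Delta>" for i :: nat
    have "0 \<le> \<Delta>"
      unfolding \<Delta>_def using assms by simp
    have p_n: "p n = b" and p_0: "p 0 = a"
      unfolding p_def \<Delta>_def using that by auto
    have p_in: "a \<le> p i \<and> p i \<le> b" if "i \<le> n" for i
    proof -
      have "real i * \<Delta> \<le> real n * \<Delta>"
        using that \<open>0 \<le> \<Delta>\<close> by (intro mult_right_mono) auto
      then show ?thesis
        using \<open>0 \<le> \<Delta>\<close> p_n unfolding p_def by auto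
    qed
    have p_Suc: "p (Suc i) - p i = \<Delta>" for i
      unfolding p_def by (simp add: algebra_simps)
    have "g b - g a = (\<Sum>i<n. g (p (Suc i)) - g (p i))"
      by (subst sum_lessThan_telescope) (simp add: p_n p_0)
    also have "\<dots> \<le> (\<Sum>i<n. \<Delta> * (h (p (Suc i)) - h (p i)) + K * \<Delta>\<^sup>2)"
    proof (rule sum_mono)
      fix i
      assume "i \<in> {..<n}"
      then show "g (p (Suc i)) - g (p i) \<le> \<Delta> * (h (p (Suc i)) - h (p i)) + K * \<Delta>\<^sup>2"
        using increment[of "p i" "p (Suc i)"] p_in[of i] p_in[of "Suc i"] p_Suc[of i] \<open>0 \<le> \<Delta>\<close>
        by auto
    qed
    also have "\<dots> = \<Delta> * (h b - h a) + real n * K * \<Delta>\<^sup>2"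
      by (simp add: sum.distrib flip: sum_distrib_left)
        (subst sum_lessThan_telescope, simp add: p_n p_0)
    also have "\<dots> = C / real n"
      unfolding C_def \<Delta>_def using that by (simp add: field_simps power2_eq_square)
    finally show ?thesis .
  qed
  then have "g b - g a \<le> 0"
    by (intro LIMSEQ_le_const[OF lim_const_over_n[of C]]) (auto intro: exI[of _ 1])
  then show ?thesis
    by simp
qed

locale baseline_game = concave_valuation v xh + type_density \<theta>l \<theta>h f F m M
  for v xh \<theta>l \<theta>h f F m M +
  fixes xl \<delta> \<theta>' :: real
  assumes xl_pos: "0 < xl" and xl_less_xh: "xl < xh"
    and v_0: "v 0 = 0"
    and xe_\<theta>l_pos: "0 < xe v xh \<theta>l" and xe_\<theta>l_le_xl: "xe v xh \<theta>l \<le> xl"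
    and virtual_surplus_nonneg:
      "\<forall>\<theta>\<in>{\<theta>l..\<theta>h}. 0 \<le> v (xe v xh \<theta>) + (\<theta> - (1 - F \<theta>) / f \<theta>) * xe v xh \<theta>"
    and discount: "0 \<le> \<delta>" "\<delta> < 1"
    and cutoff: "\<theta>' \<in> {\<theta>l..\<theta>h}"
begin

abbreviation ub :: real where
  "ub \<equiv> ubar v xh \<theta>l"

lemma util_\<theta>l: "xl \<le> x \<Longrightarrow> x \<le> xh \<Longrightarrow> util x \<theta>l = ub"
  using util_eq[of x \<theta>l] xe_\<theta>l_le_xl xl_pos by (simp add: ubar_def min_absorb2)

lemma ub_pos: "0 < ub"
proof -
  have "0 \<le> ub"
    using surplus_le_util[of xh 0 \<theta>l] util_\<theta>l[of xh] v_0 xl_less_xh xh_pos by simp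
  moreover have "ub \<noteq> 0"
  proof
    assume "ub = 0"
    then have "\<forall>y\<in>{0..xh}. v y + \<theta>l * y \<le> v 0 + \<theta>l * 0"
      using xe_max[of _ \<theta>l] v_0 by (simp add: ubar_def)
    then have "0 = x\<^sub>e \<theta>l"
      using surplus_maximiser_unique[of 0 \<theta>l "x\<^sub>e \<theta>l"] xe_in xe_max xh_pos by auto
    then show False
      using xe_\<theta>l_pos by simp
  qed
  ultimately show ?thesis
    by simp
qed

lemma ub_le_util: "xl \<le> x \<Longrightarrow> x \<le> xh \<Longrightarrow> \<theta>l \<le> \<theta> \<Longrightarrow> ub \<le> util x \<theta>"
  using util_mono[of x \<theta>l \<theta>] util_\<theta>l[of x] xl_pos by simp

lemma util_xh_pos: "\<theta>l \<le> \<theta> \<Longrightarrow> 0 < util xh \<theta>"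
  using ub_le_util[of xh \<theta>] ub_pos xl_less_xh by simp

text \<open>(A4) with the division by \<open>f\<close> cleared.\<close>
lemma virtual_surplus_nonneg':
  assumes "\<theta> \<in> {\<theta>l..\<theta>h}"
  shows "(1 - F \<theta>) * x\<^sub>e \<theta> \<le> util xh \<theta> * f \<theta>"
proof -
  have "(1 - F \<theta>) * x\<^sub>e \<theta> / f \<theta> \<le> util xh \<theta>"
    using virtual_surplus_nonneg assms util_xh[of \<theta>] by (simp add: algebra_simps)
  then show ?thesis
    using f_pos[OF assms] by (simp add: divide_simps)
qed

lemma mass_lower_bound:
  assumes "\<theta>l \<le> a" "a \<le> b" "b \<le> s" "s \<le> \<theta>h"
  shows "(b - a) * (x\<^sub>e a * (F s - F b)) \<le> util xh b * (F b - F a)"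
proof -
  have "0 < util xh b"
    using util_xh_pos assms by simp
  have "x\<^sub>e a * (F s - F b) / util xh b \<le> f \<theta>" if "\<theta> \<in> {a..b}" for \<theta>
  proof -
    have "x\<^sub>e a * (F s - F b) \<le> x\<^sub>e \<theta> * (1 - F \<theta>)"
      using xe_mono[of a \<theta>] xe_in[of \<theta>] F_mono[of b s] F_mono[of \<theta> b] F_bounds[of s] assms that
      by (intro mult_mono) auto
    also have "\<dots> \<le> util xh \<theta> * f \<theta>"
      using virtual_surplus_nonneg'[of \<theta>] assms that by (simp add: mult.commute)
    also have "\<dots> \<le> util xh b * f \<theta>"
      using util_mono[of xh \<theta> b] f_pos[of \<theta>] assms that xh_pos by (intro mult_right_mono) auto
    finally show ?thesis
      using \<open>0 < util xh b\<close> by (simp add: divide_simps mult.commute)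
  qed
  then have "x\<^sub>e a * (F s - F b) / util xh b * (b - a) \<le> F b - F a"
    using assms by (intro F_diff_lower_bound) auto
  then show ?thesis
    using \<open>0 < util xh b\<close> by (simp add: divide_simps mult_ac)
qed

lemma posted_price_increment:
  assumes "\<theta>l \<le> a" "a \<le> b" "b \<le> s" "s \<le> \<theta>h"
  shows "util xh b * (F s - F b) - util xh a * (F s - F a)
           \<le> (b - a) * (x\<^sub>e b - x\<^sub>e a) + xh * M * (b - a)\<^sup>2"
proof -
  define U \<Delta> G where "U = util xh" and "\<Delta> = b - a" and "G = F s - F b"
  have "0 \<le> \<Delta>" "0 \<le> G" "G \<le> 1" "x\<^sub>e a \<le> x\<^sub>e b"
    using assms F_mono[of b s] F_bounds[of s] F_bounds[of b] xe_mono[of a b]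
    unfolding \<Delta>_def G_def by auto
  have U: "U b - U a \<le> \<Delta> * x\<^sub>e b" "0 \<le> U b - U a" "U b - U a \<le> xh * \<Delta>"
    using util_xh_diff_le[of b a] util_mono[of xh a b] util_xh_lipschitz[of a b] assms xh_pos
    unfolding U_def \<Delta>_def by auto
  have "0 \<le> xh * \<Delta>"
    using xh_pos \<open>0 \<le> \<Delta>\<close> by simp
  have F: "0 \<le> F b - F a" "F b - F a \<le> M * \<Delta>"
    using F_mono[of a b] F_diff_upper_bound[of a b M] f_bounds assms unfolding \<Delta>_def by auto
  have "U b * G - U a * (F s - F a) = (U b - U a) * G - U b * (F b - F a) + (U b - U a) * (F b - F a)"
    unfolding G_def by (simp add: algebra_simps)
  also have "\<dots> \<le> \<Delta> * x\<^sub>e b * G - \<Delta> * (x\<^sub>e a * G) + xh * \<Delta> * (M * \<Delta>)"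
    using mult_right_mono[OF U(1) \<open>0 \<le> G\<close>] mult_mono[OF U(3) F(2) \<open>0 \<le> xh * \<Delta>\<close> F(1)]
      mass_lower_bound[OF assms] unfolding U_def \<Delta>_def G_def by simp
  also have "\<dots> = G * (\<Delta> * (x\<^sub>e b - x\<^sub>e a)) + xh * M * \<Delta>\<^sup>2"
    by (simp add: algebra_simps power2_eq_square)
  also have "\<dots> \<le> \<Delta> * (x\<^sub>e b - x\<^sub>e a) + xh * M * \<Delta>\<^sup>2"
    using mult_left_le_one_le[of "\<Delta> * (x\<^sub>e b - x\<^sub>e a)" G] \<open>0 \<le> \<Delta>\<close> \<open>0 \<le> G\<close> \<open>G \<le> 1\<close> \<open>x\<^sub>e a \<le> x\<^sub>e b\<close>
    by simp
  finally show ?thesis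
    unfolding U_def G_def \<Delta>_def .
qed

text \<open>Where (A4) enters: selling the efficient bundle at price \<open>util xh t\<close> to the types
  in \<open>[\<theta>l, s]\<close> earns at most \<open>ub\<close> per unit of mass, because
  \<open>\<tau> \<mapsto> util xh \<tau> * (F s - F \<tau>)\<close> is nonincreasing. The density need not be continuous,
  so monotonicity comes from the increment bound rather than from a derivative.\<close>
lemma posted_price_revenue_le:
  assumes "\<theta>l \<le> t" "t \<le> s" "s \<le> \<theta>h"
  shows "util xh t * (F s - F t) \<le> ub * F s"
proof -
  have "util xh t * (F s - F t) \<le> util xh \<theta>l * (F s - F \<theta>l)"
  proof (rule nonincreasing_if_increment_bound[where g="\<lambda>\<tau>. util xh \<tau> * (F s - F \<tau>)"])
    show "\<theta>l \<le> t"
      by fact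
    show "util xh y * (F s - F y) - util xh x * (F s - F x)
            \<le> (y - x) * (x\<^sub>e y - x\<^sub>e x) + xh * M * (y - x)\<^sup>2"
      if "\<theta>l \<le> x" "x \<le> y" "y \<le> t" for x y
      using posted_price_increment[of x y s] that assms by simp
  qed
  then show ?thesis
    using util_\<theta>l[of xh] xl_less_xh F_\<theta>l by simp
qed

section \<open>Beliefs\<close>

definition down_closed :: "real set \<Rightarrow> bool" where
  "down_closed L \<longleftrightarrow> (\<forall>x\<in>L \<inter> {\<theta>l..\<theta>'}. \<forall>y\<in>{\<theta>l..x}. y \<in> L)"

definition price_bounded :: "real measure \<Rightarrow> bool" where
  "price_bounded \<nu> \<longleftrightarrow> (\<forall>L\<in>sets borel. down_closed L \<longrightarrow>
     (\<forall>c>0. c * measure \<nu> (L \<inter> {\<theta>. c \<le> util xh \<theta>}) \<le> ub * measure \<nu> L))"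

definition admissible_belief :: "real measure \<Rightarrow> bool" where
  "admissible_belief \<nu> \<longleftrightarrow>
     prob_space \<nu> \<and> sets \<nu> = sets borel \<and> emeasure \<nu> {\<theta>l..\<theta>'} = 1 \<and> price_bounded \<nu>"

lemma down_closed_Int: "down_closed A \<Longrightarrow> down_closed B \<Longrightarrow> down_closed (A \<inter> B)"
  unfolding down_closed_def by blast

lemma down_closed_Sup:
  assumes "L \<subseteq> {\<theta>l..\<theta>'}" "down_closed L" "L \<noteq> {}"
  shows "{\<theta>l..<Sup L} \<subseteq> L" "L \<subseteq> {\<theta>l..Sup L}" "Sup L \<le> \<theta>'"
proof -
  have "bdd_above L"
    using assms(1) by (intro bdd_aboveI[of _ \<theta>']) auto
  show "L \<subseteq> {\<theta>l..Sup L}"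
    using assms(1) cSup_upper[OF _ \<open>bdd_above L\<close>] by auto
  show "Sup L \<le> \<theta>'"
    using assms(1) by (intro cSup_least[OF assms(3)]) auto
  show "{\<theta>l..<Sup L} \<subseteq> L"
  proof
    fix y
    assume y: "y \<in> {\<theta>l..<Sup L}"
    then obtain x where "x \<in> L" "y < x"
      using less_cSup_iff[OF assms(3) \<open>bdd_above L\<close>] by auto
    then have "x \<in> L \<inter> {\<theta>l..\<theta>'}" "y \<in> {\<theta>l..x}"
      using assms(1) y by auto
    with assms(2) show "y \<in> L"
      unfolding down_closed_def by blast
  qed
qed

lemma le_util_xh_Inf:
  assumes "S \<subseteq> {\<theta>. c \<le> util xh \<theta>}" "S \<noteq> {}" "bdd_below S"
  shows "c \<le> util xh (Inf S)"
proof -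
  have "closed {\<theta>. c \<le> util xh \<theta>}"
    by (rule closed_Collect_le) (auto intro: continuous_util_xh continuous_intros)
  then have "closure S \<subseteq> {\<theta>. c \<le> util xh \<theta>}"
    using assms(1) by (rule closure_minimal[rotated])
  then show ?thesis
    using closure_contains_Inf[OF assms(2,3)] by auto
qed

lemma type_dist_price_bound:
  assumes L: "L \<in> sets borel" "L \<subseteq> {\<theta>l..\<theta>'}" "down_closed L" and "0 < c"
  shows "c * measure T (L \<inter> {\<theta>. c \<le> util xh \<theta>}) \<le> ub * measure T L"
proof -
  interpret T: prob_space T
    by (rule prob_space_T)
  define S where "S = L \<inter> {\<theta>. c \<le> util xh \<theta>}"
  have "measure T S \<le> measure T L"
    unfolding S_def using L by (intro T.finite_measure_mono) auto
  consider "c \<le> ub" | "S = {}" | "S \<noteq> {}"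
    by fastforce
  then show ?thesis
  proof cases
    case 1
    then show ?thesis
      using \<open>measure T S \<le> measure T L\<close> \<open>0 < c\<close> unfolding S_def
      by (meson less_imp_le measure_nonneg mult_mono order_trans)
  next
    case 2
    then show ?thesis
      using ub_pos unfolding S_def by simp
  next
    case 3
    define t s where "t = Inf S" and "s = Sup L"
    have "L \<noteq> {}"
      using 3 unfolding S_def by auto
    note L_s = down_closed_Sup[OF L(2,3) this, folded s_def]
    have S_sub: "S \<subseteq> {\<theta>l..s}"
      using L_s(2) unfolding S_def by auto
    then have "bdd_below S"
      by (intro bdd_belowI[of _ \<theta>l]) auto
    have "\<theta>l \<le> t"
      unfolding t_def using 3 S_sub by (intro cInf_greatest) auto
    have "S \<subseteq> {t..s}"
      unfolding t_def using S_sub cInf_lower[OF _ \<open>bdd_below S\<close>] by auto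
    then have t_s: "\<theta>l \<le> t" "t \<le> s" "s \<le> \<theta>h"
      using 3 \<open>\<theta>l \<le> t\<close> L_s(3) cutoff by auto
    have "c * measure T S \<le> c * (F s - F t)"
      using T.finite_measure_mono[OF \<open>S \<subseteq> {t..s}\<close>] measure_T_Icc[OF t_s] \<open>0 < c\<close> by simp
    also have "\<dots> \<le> util xh t * (F s - F t)"
      using le_util_xh_Inf[of S c] 3 \<open>bdd_below S\<close> F_mono[OF t_s]
      unfolding S_def t_def by (intro mult_right_mono) auto
    also have "\<dots> \<le> ub * F s"
      by (rule posted_price_revenue_le[OF t_s])
    also have "\<dots> \<le> ub * measure T L"
      using T.finite_measure_mono[OF L_s(1)] measure_T_Ico[of \<theta>l s] t_s L(1) F_\<theta>l ub_pos by simp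
    finally show ?thesis
      unfolding S_def .
  qed
qed

lemma price_bounded_uniform_measure:
  assumes \<nu>: "prob_space \<nu>" "sets \<nu> = sets borel"
    and A: "A \<in> sets borel" "down_closed A" "emeasure \<nu> A \<noteq> 0"
    and bound: "\<And>L c. L \<in> sets borel \<Longrightarrow> L \<subseteq> A \<Longrightarrow> down_closed L \<Longrightarrow> 0 < c \<Longrightarrow>
                  c * measure \<nu> (L \<inter> {\<theta>. c \<le> util xh \<theta>}) \<le> ub * measure \<nu> L"
  shows "price_bounded (uniform_measure \<nu> A)"
  unfolding price_bounded_def
proof (intro ballI impI allI)
  interpret prob_space \<nu>
    by fact
  fix L c
  assume L: "L \<in> sets borel" "down_closed L" and "0 < (c::real)"
  have "0 < measure \<nu> A"
    using A \<nu>(2) by (simp add: emeasure_eq_measure zero_less_measure_iff)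
  have "c * measure \<nu> (A \<inter> L \<inter> {\<theta>. c \<le> util xh \<theta>}) \<le> ub * measure \<nu> (A \<inter> L)"
    using L A \<open>0 < c\<close> by (intro bound down_closed_Int) auto
  then have "c * (measure \<nu> (A \<inter> (L \<inter> {\<theta>. c \<le> util xh \<theta>})) / measure \<nu> A)
               \<le> ub * (measure \<nu> (A \<inter> L) / measure \<nu> A)"
    using \<open>0 < measure \<nu> A\<close> by (simp add: Int_assoc divide_right_mono)
  then show "c * measure (uniform_measure \<nu> A) (L \<inter> {\<theta>. c \<le> util xh \<theta>})
               \<le> ub * measure (uniform_measure \<nu> A) L"
    using A L \<nu>(2) by (simp add: measure_uniform_measure)
qed

lemma admissible_uniform_measure:
  assumes "admissible_belief \<nu>" "A \<in> sets borel" "down_closed A" "emeasure \<nu> A \<noteq> 0"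
  shows "admissible_belief (uniform_measure \<nu> A)"
proof -
  interpret prob_space \<nu>
    using assms(1) unfolding admissible_belief_def by simp
  have sets_\<nu>: "sets \<nu> = sets borel"
    using assms(1) unfolding admissible_belief_def by simp
  have "AE \<theta> in \<nu>. \<theta> \<in> {\<theta>l..\<theta>'}"
    using assms(1) sets_\<nu> AE_in_set_eq_1[of "{\<theta>l..\<theta>'}"]
    unfolding admissible_belief_def by (simp add: emeasure_eq_measure)
  then have "emeasure \<nu> (A \<inter> {\<theta>l..\<theta>'}) = emeasure \<nu> A"
    using assms(2) sets_\<nu> by (intro emeasure_eq_AE) auto
  then have "emeasure (uniform_measure \<nu> A) {\<theta>l..\<theta>'} = 1"
    using assms(2,4) sets_\<nu>
    by (simp add: emeasure_uniform_measure divide_eq_1_ennreal ennreal_divide_self)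
  moreover have "price_bounded (uniform_measure \<nu> A)"
    using assms sets_\<nu> prob_space_axioms
    by (intro price_bounded_uniform_measure) (auto simp: admissible_belief_def price_bounded_def)
  ultimately show ?thesis
    unfolding admissible_belief_def using assms(2,4) sets_\<nu>
    by (auto intro: prob_space_uniform_measure)
qed

lemma admissible_prior: "admissible_belief (cond_type_dist \<theta>l \<theta>h f \<theta>')"
proof (cases "\<theta>' = \<theta>l")
  case True
  have "price_bounded (return borel \<theta>l)"
    using ub_pos util_\<theta>l[of xh] xl_less_xh
    by (auto simp: price_bounded_def measure_return indicator_def)
  then show ?thesis
    using True unfolding admissible_belief_def cond_type_dist_def
    by (simp add: prob_space_return)
next
  case False
  interpret T: prob_space T
    by (rule prob_space_T)
  have "\<theta>l < \<theta>'"
    using False cutoff by auto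
  have "0 < m * (\<theta>' - \<theta>l)"
    using m_pos \<open>\<theta>l < \<theta>'\<close> by simp
  also have "\<dots> \<le> measure T {\<theta>l..\<theta>'}"
    using cutoff f_bounds measure_T_Icc[of \<theta>l \<theta>'] by (auto intro: F_diff_lower_bound)
  finally have "emeasure T {\<theta>l..\<theta>'} \<noteq> 0"
    by (simp add: T.emeasure_eq_measure)
  moreover have "down_closed {\<theta>l..\<theta>'}"
    unfolding down_closed_def by auto
  moreover have "price_bounded (uniform_measure T {\<theta>l..\<theta>'})"
    using \<open>emeasure T {\<theta>l..\<theta>'} \<noteq> 0\<close> \<open>down_closed {\<theta>l..\<theta>'}\<close> type_dist_price_bound
    by (intro price_bounded_uniform_measure T.prob_space_axioms) auto
  ultimately show ?thesis
    using False unfolding admissible_belief_def cond_type_dist_def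
    by (auto simp: ennreal_divide_self less_top[symmetric] intro: prob_space_uniform_measure)
qed

section \<open>The equilibrium\<close>

text \<open>A type accepts iff buying now is at least as good as buying at price \<open>ub\<close> in the next
  period. Offers with an invalid quantity never occur and are accepted by every type.\<close>
definition accepts :: "offer \<Rightarrow> real \<Rightarrow> bool" where
  "accepts q \<theta> \<longleftrightarrow>
     \<theta> \<in> {\<theta>l..\<theta>'} \<and> (fst q \<in> {xl..xh} \<longrightarrow> snd q - \<delta> * ub \<le> (1 - \<delta>) * util (fst q) \<theta>)"

definition buyer :: buyer_strategy where
  "buyer h q \<theta> = accepts q \<theta>"

text \<open>Repeating the last quantity makes the continuation after any offer \<open>(x, p)\<close> the offer
  \<open>(x, ub)\<close> forever.\<close>
definition seller_qty :: "hist \<Rightarrow> real" where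
  "seller_qty h = (if h \<noteq> [] \<and> fst (last h) \<in> {xl..xh} then fst (last h) else xh)"

definition seller :: seller_strategy where
  "seller h r = (seller_qty h, ub)"

definition belief_update :: "real measure \<Rightarrow> offer \<Rightarrow> real measure" where
  "belief_update \<nu> q =
     (if emeasure \<nu> {\<theta>. \<not> accepts q \<theta>} \<noteq> 0 then uniform_measure \<nu> {\<theta>. \<not> accepts q \<theta>} else \<nu>)"

definition belief :: "hist \<Rightarrow> real measure" where
  "belief h = foldl belief_update (cond_type_dist \<theta>l \<theta>h f \<theta>') h"

lemma pred_accepts:
  assumes q: "q \<in> N \<rightarrow>\<^sub>M (borel :: offer measure)" and [measurable]: "t \<in> borel_measurable N"
  shows "Measurable.pred N (\<lambda>z. accepts (q z) (t z))"
proof -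
  note [measurable] = measurable_offer_components[OF q]
  show ?thesis
    unfolding accepts_def by measurable
qed

lemma accepts_sets[measurable]: "{\<theta>. accepts q \<theta>} \<in> sets borel"
  using pred_accepts[of "\<lambda>_. q" borel "\<lambda>\<theta>. \<theta>"] by (simp add: pred_def)

lemma down_closed_rejecting: "down_closed {\<theta>. \<not> accepts q \<theta>}"
  unfolding down_closed_def
proof (intro ballI)
  fix x y
  assume x: "x \<in> {\<theta>. \<not> accepts q \<theta>} \<inter> {\<theta>l..\<theta>'}" and y: "y \<in> {\<theta>l..x}"
  then have "fst q \<in> {xl..xh}" "snd q - \<delta> * ub > (1 - \<delta>) * util (fst q) x"
    unfolding accepts_def by auto
  moreover have "(1 - \<delta>) * util (fst q) y \<le> (1 - \<delta>) * util (fst q) x"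
    using util_mono[of "fst q" y x] \<open>fst q \<in> {xl..xh}\<close> xl_pos y discount
    by (intro mult_left_mono) auto
  ultimately show "y \<in> {\<theta>. \<not> accepts q \<theta>}"
    unfolding accepts_def by auto
qed

lemma admissible_belief: "admissible_belief (belief h)"
proof (induction h rule: rev_induct)
  case Nil
  then show ?case
    using admissible_prior by (simp add: belief_def)
next
  case (snoc q h)
  then show ?case
    using admissible_uniform_measure[OF _ _ down_closed_rejecting]
    by (simp add: belief_def belief_update_def sets.compl_sets Collect_neg_eq)
qed

lemma seller_qty_in: "seller_qty h \<in> {xl..xh}"
  unfolding seller_qty_def using xl_less_xh by auto

lemma seller_qty_append_replicate: "seller_qty (h @ replicate j (seller_qty h, ub)) = seller_qty h"
  using seller_qty_in[of h] by (cases j) (auto simp: seller_qty_def)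

lemma hst_seller: "hst seller h \<omega> j = h @ replicate j (seller_qty h, ub)"
  by (induction j) (simp_all add: seller_def seller_qty_append_replicate replicate_append_same)

lemma seller_valid: "seller_valid xl xh seller"
  unfolding seller_valid_def
proof (intro conjI allI)
  show "valid_offer xl xh (seller h r)" for h r
    using seller_qty_in unfolding seller_def valid_offer_def by auto
  fix n
  show "(\<lambda>(g, r). seller (map g [0..<n]) r) \<in> Pi\<^sub>M {0..<n} (\<lambda>_. borel) \<Otimes>\<^sub>M borel \<rightarrow>\<^sub>M borel"
  proof (cases n)
    case 0
    then show ?thesis
      by (simp add: seller_def)
  next
    case (Suc k)
    let ?H = "Pi\<^sub>M {0..<n} (\<lambda>_. borel :: offer measure) \<Otimes>\<^sub>M (borel :: real measure)"
    have "(\<lambda>z. fst z k) \<in> ?H \<rightarrow>\<^sub>M (borel :: offer measure)"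
      using Suc by (intro measurable_compose[OF measurable_fst measurable_component_singleton]) auto
    note [measurable] = measurable_offer_components(1)[OF this]
    have "(\<lambda>z. (if fst (fst z k) \<in> {xl..xh} then fst (fst z k) else xh, ub))
            \<in> ?H \<rightarrow>\<^sub>M borel \<Otimes>\<^sub>M borel"
      by measurable
    moreover have "(\<lambda>(g, r). seller (map g [0..<n]) r)
                     = (\<lambda>z. (if fst (fst z k) \<in> {xl..xh} then fst (fst z k) else xh, ub))"
      using Suc by (auto simp: seller_def seller_qty_def fun_eq_iff)
    ultimately show ?thesis
      by (simp add: borel_prod)
  qed
qed

lemma boff_seller:
  assumes "valid_offer xl xh q"
  shows "boff seller h q \<omega> k = (if k = 0 then q else (fst q, ub))"
  using seller_qty_append_replicate[of "h @ [q]"] assms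
  by (cases k) (auto simp: boff_def seller_def hst_seller seller_qty_def valid_offer_def)

lemma bhist_seller:
  "bhist seller h q \<omega> k = (case k of 0 \<Rightarrow> h | Suc j \<Rightarrow> (h @ [q]) @ replicate j (seller_qty (h @ [q]), ub))"
  by (cases k) (auto simp: bhist_def hst_seller)

lemma accepts_ub:
  assumes "x \<in> {xl..xh}" "\<theta> \<in> {\<theta>l..\<theta>'}"
  shows "accepts (x, ub) \<theta>"
proof -
  have "(1 - \<delta>) * ub \<le> (1 - \<delta>) * util x \<theta>"
    using ub_le_util[of x \<theta>] assms discount by (intro mult_left_mono) auto
  then show ?thesis
    using assms unfolding accepts_def by (simp add: algebra_simps)
qed

lemma buyer_optimal:
  assumes "valid_offer xl xh q" "\<theta> \<in> {\<theta>l..\<theta>'}"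
  shows "buyer_val v \<delta> seller c h q \<theta> \<le> buyer_val v \<delta> seller (\<lambda>h' q'. buyer h' q' \<theta>) h q \<theta>"
proof -
  define x p where "x = fst q" and "p = snd q"
  then have q: "q = (x, p)"
    by simp
  have x: "x \<in> {xl..xh}"
    using assms(1) q unfolding valid_offer_def by auto
  define u where "u = util x \<theta>"
  have u: "u_fun v x \<theta> = u" "ub \<le> u"
    using u_fun_eq_util[of x \<theta>] ub_le_util[of x \<theta>] x assms(2) xl_pos unfolding u_def by auto
  define offers where "offers k = (if k = 0 then q else (x, ub))" for k :: nat
  define G where "G k = u_fun v (fst (offers k)) \<theta> - snd (offers k)" for k
  have G: "G 0 = u - p" "\<And>j. G (Suc j) = u - ub"
    unfolding G_def offers_def using q u by auto
  have val_eq: "buyer_val v \<delta> seller c' h q \<theta> = disc_first \<delta> (\<lambda>k. c' (bhist seller h q (\<lambda>_. 0) k) (offers k)) G"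
    for c'
    unfolding buyer_val_def G_def offers_def x_def
    using assms(1) by (simp add: boff_seller bhist_seller)
  have "buyer_val v \<delta> seller c h q \<theta> \<le> max (u - p) (\<delta> * (u - ub))"
    unfolding val_eq using disc_first_le_max[of \<delta> G "u - ub"] G discount u by simp
  moreover have "buyer_val v \<delta> seller (\<lambda>h' q'. buyer h' q' \<theta>) h q \<theta> = max (u - p) (\<delta> * (u - ub))"
  proof (cases "accepts q \<theta>")
    case True
    then have "\<delta> * (u - ub) \<le> u - p"
      using q x unfolding accepts_def u_def by (simp add: algebra_simps)
    with True show ?thesis
      unfolding val_eq using G by (simp add: disc_first_0 buyer_def offers_def bhist_def)
  next
    case False
    then have "u - p < \<delta> * (u - ub)"
      using q x assms(2) unfolding accepts_def u_def by (auto simp: algebra_simps)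
    moreover have "accepts (x, ub) \<theta>"
      using accepts_ub x assms(2) by simp
    ultimately show ?thesis
      unfolding val_eq using False G by (simp add: disc_first_1 buyer_def offers_def bhist_def)
  qed
  ultimately show ?thesis
    by simp
qed

lemma seller_val_seller:
  assumes "admissible_belief \<nu>"
  shows "seller_val \<delta> seller buyer \<nu> h = ub"
proof -
  interpret prob_space \<nu>
    using assms unfolding admissible_belief_def by simp
  have "accepts (seller_qty h, ub) \<theta>" if "\<theta> \<in> {\<theta>l..\<theta>'}" for \<theta>
    using accepts_ub seller_qty_in that by simp
  then have "disc_first \<delta> (\<lambda>k. buyer (hst seller h \<omega> k) (seller (hst seller h \<omega> k) (\<omega> k)) \<theta>)
               (\<lambda>k. snd (seller (hst seller h \<omega> k) (\<omega> k))) = ub * indicator {\<theta>l..\<theta>'} \<theta>" for \<omega> \<theta>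
  proof (cases "\<theta> \<in> {\<theta>l..\<theta>'}")
    case True
    with \<open>\<And>\<theta>. _ \<Longrightarrow> accepts (seller_qty h, ub) \<theta>\<close> show ?thesis
      by (simp add: disc_first_0 buyer_def seller_def)
  next
    case False
    then show ?thesis
      by (auto simp: disc_first_def buyer_def accepts_def)
  qed
  then have "seller_val \<delta> seller buyer \<nu> h = (\<integral>\<theta>. ub * indicator {\<theta>l..\<theta>'} \<theta> \<partial>\<nu>)"
    unfolding seller_val_def by simp
  also have "\<dots> = ub"
    using assms unfolding admissible_belief_def by (simp add: emeasure_eq_measure)
  finally show ?thesis .
qed

text \<open>Types accepting \<open>(x, p)\<close> value the efficient bundle at least at
  \<open>(p - \<delta> ub) / (1 - \<delta>)\<close>, so \<^const>\<open>price_bounded\<close> controls their mass.\<close>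
lemma accepting_mass_le:
  assumes \<nu>: "admissible_belief \<nu>" and R: "R \<in> sets borel" "down_closed R"
    and x: "fst q \<in> {xl..xh}" and p: "\<delta> * ub < snd q"
  shows "(snd q - \<delta> * ub) * measure \<nu> (R \<inter> {\<theta>. accepts q \<theta>}) \<le> (1 - \<delta>) * (ub * measure \<nu> R)"
proof -
  interpret prob_space \<nu>
    using \<nu> unfolding admissible_belief_def by simp
  have sets_\<nu>: "sets \<nu> = sets borel"
    using \<nu> unfolding admissible_belief_def by simp
  define c where "c = (snd q - \<delta> * ub) / (1 - \<delta>)"
  have "0 < c" and c: "snd q - \<delta> * ub = (1 - \<delta>) * c"
    unfolding c_def using p discount by auto
  have "R \<inter> {\<theta>. accepts q \<theta>} \<subseteq> R \<inter> {\<theta>. c \<le> util xh \<theta>}"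
  proof safe
    fix \<theta>
    assume "accepts q \<theta>"
    then have "(1 - \<delta>) * c \<le> (1 - \<delta>) * util (fst q) \<theta>"
      using x c unfolding accepts_def by auto
    also have "\<dots> \<le> (1 - \<delta>) * util xh \<theta>"
      using util_le_util_xh[of "fst q" \<theta>] x xl_pos discount by (intro mult_left_mono) auto
    finally show "c \<le> util xh \<theta>"
      using discount by simp
  qed
  then have "c * measure \<nu> (R \<inter> {\<theta>. accepts q \<theta>}) \<le> c * measure \<nu> (R \<inter> {\<theta>. c \<le> util xh \<theta>})"
    using R sets_\<nu> \<open>0 < c\<close> by (intro mult_left_mono finite_measure_mono) auto
  also have "\<dots> \<le> ub * measure \<nu> R"
    using \<nu> R \<open>0 < c\<close> unfolding admissible_belief_def price_bounded_def by blast
  finally show ?thesis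
    unfolding c using discount by (simp add: mult.assoc mult_left_mono)
qed

lemma period_revenue_le:
  assumes \<nu>: "admissible_belief \<nu>" and R: "R \<in> sets borel" "down_closed R"
    and x: "fst q \<in> {xl..xh}"
  shows "max 0 (snd q) * measure \<nu> (R \<inter> {\<theta>. accepts q \<theta>})
           + \<delta> * ub * measure \<nu> (R - {\<theta>. accepts q \<theta>}) \<le> ub * measure \<nu> R"
proof -
  interpret prob_space \<nu>
    using \<nu> unfolding admissible_belief_def by simp
  have sets_\<nu>: "sets \<nu> = sets borel"
    using \<nu> unfolding admissible_belief_def by simp
  define a r where "a = measure \<nu> (R \<inter> {\<theta>. accepts q \<theta>})" and "r = measure \<nu> R"
  have diff: "measure \<nu> (R - {\<theta>. accepts q \<theta>}) = r - a"
    unfolding a_def r_def using R sets_\<nu> by (simp add: Diff_Int finite_measure_Diff')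
  have "0 \<le> a" "a \<le> r"
    unfolding a_def r_def using R sets_\<nu> by (auto intro: finite_measure_mono)
  have "max 0 (snd q) * a \<le> \<delta> * ub * a + (1 - \<delta>) * (ub * r)"
  proof (cases "snd q \<le> \<delta> * ub")
    case True
    then have "max 0 (snd q) * a \<le> \<delta> * ub * a"
      using \<open>0 \<le> a\<close> discount ub_pos by (intro mult_right_mono) auto
    moreover have "0 \<le> (1 - \<delta>) * (ub * r)"
      using \<open>0 \<le> a\<close> \<open>a \<le> r\<close> discount ub_pos by simp
    ultimately show ?thesis
      by linarith
  next
    case False
    moreover have "0 \<le> \<delta> * ub"
      using discount ub_pos by simp
    ultimately have "max 0 (snd q) = snd q"
      by simp
    with accepting_mass_le[OF \<nu> R x] False show ?thesis
      unfolding a_def r_def by (simp add: algebra_simps)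
  qed
  then have "max 0 (snd q) * a + \<delta> * ub * (r - a) \<le> ub * r"
    by (simp add: algebra_simps)
  then show ?thesis
    unfolding diff a_def[symmetric] r_def[symmetric] .
qed

definition rejects_until :: "(nat \<Rightarrow> offer) \<Rightarrow> nat \<Rightarrow> real set" where
  "rejects_until offer k = {\<theta>. \<forall>j<k. \<not> accepts (offer j) \<theta>}"

lemma rejects_until_Suc:
  "rejects_until offer (Suc k) = rejects_until offer k - {\<theta>. accepts (offer k) \<theta>}"
  unfolding rejects_until_def by (auto simp: less_Suc_eq)

lemma rejects_until_sets_down_closed:
  "rejects_until offer k \<in> sets borel \<and> down_closed (rejects_until offer k)"
proof (induction k)
  case 0
  then show ?case
    unfolding rejects_until_def down_closed_def by simp
next
  case (Suc k)
  then show ?case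
    unfolding rejects_until_Suc Diff_eq using down_closed_Int[OF _ down_closed_rejecting]
    by (auto simp: Collect_neg_eq sets.compl_sets)
qed

lemma nn_integral_first_acceptance:
  assumes \<nu>: "admissible_belief \<nu>"
  shows "(\<integral>\<^sup>+ \<theta>. ennreal (max 0 (disc_first \<delta> (\<lambda>k. accepts (offer k) \<theta>) (\<lambda>k. snd (offer k)))) \<partial>\<nu>)
           = (\<Sum>k. ennreal (\<delta> ^ k * (max 0 (snd (offer k))
                 * measure \<nu> (rejects_until offer k \<inter> {\<theta>. accepts (offer k) \<theta>}))))"
proof -
  interpret prob_space \<nu>
    using \<nu> unfolding admissible_belief_def by simp
  define E where "E k = rejects_until offer k \<inter> {\<theta>. accepts (offer k) \<theta>}" for k
  define p where "p k = max 0 (snd (offer k))" for k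
  have E: "E k \<in> sets \<nu>" for k
    using \<nu> conjunct1[OF rejects_until_sets_down_closed]
    unfolding E_def admissible_belief_def by simp
  have "(\<integral>\<^sup>+ \<theta>. ennreal (max 0 (disc_first \<delta> (\<lambda>k. accepts (offer k) \<theta>) (\<lambda>k. snd (offer k)))) \<partial>\<nu>)
          = (\<integral>\<^sup>+ \<theta>. (\<Sum>k. ennreal (\<delta> ^ k * p k) * indicator (E k) \<theta>) \<partial>\<nu>)"
    unfolding ennreal_max_disc_first[OF discount(1)] E_def p_def rejects_until_def
    by (intro nn_integral_cong suminf_cong) (auto simp: indicator_def)
  also have "\<dots> = (\<Sum>k. \<integral>\<^sup>+ \<theta>. ennreal (\<delta> ^ k * p k) * indicator (E k) \<theta> \<partial>\<nu>)"
    using E by (intro nn_integral_suminf borel_measurable_times_ennreal borel_measurable_const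
        borel_measurable_indicator)
  also have "\<dots> = (\<Sum>k. ennreal (\<delta> ^ k * (p k * measure \<nu> (E k))))"
    using E discount
    by (simp add: nn_integral_cmult_indicator emeasure_eq_measure p_def ennreal_mult'[symmetric]
        mult.assoc)
  finally show ?thesis
    unfolding E_def p_def .
qed

lemma deterministic_offers_revenue_le:
  assumes \<nu>: "admissible_belief \<nu>" and valid: "\<And>k. fst (offer k) \<in> {xl..xh}"
  shows "(\<integral>\<theta>. max 0 (disc_first \<delta> (\<lambda>k. accepts (offer k) \<theta>) (\<lambda>k. snd (offer k))) \<partial>\<nu>) \<le> ub"
proof (rule integral_le_of_nn_integral_le)
  interpret prob_space \<nu>
    using \<nu> unfolding admissible_belief_def by simp
  have sets_\<nu>: "sets \<nu> = sets borel"
    using \<nu> unfolding admissible_belief_def by simp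
  then have "space \<nu> = UNIV"
    using sets_eq_imp_space_eq by fastforce
  then have "Measurable.pred \<nu> (accepts (offer k))" for k
    unfolding pred_def sets_\<nu> by (simp add: accepts_sets)
  then show "(\<lambda>\<theta>. max 0 (disc_first \<delta> (\<lambda>k. accepts (offer k) \<theta>) (\<lambda>k. snd (offer k))))
               \<in> borel_measurable \<nu>"
    by (intro borel_measurable_max borel_measurable_const borel_measurable_disc_first)
  define R where "R = rejects_until offer"
  have "(\<Sum>k<n. \<delta> ^ k * (max 0 (snd (offer k)) * measure \<nu> (R k \<inter> {\<theta>. accepts (offer k) \<theta>}))) \<le> ub"
    for n
  proof (rule discounted_sum_le_if_budget[where r="\<lambda>k. measure \<nu> (R k)"])
    show "max 0 (snd (offer k)) * measure \<nu> (R k \<inter> {\<theta>. accepts (offer k) \<theta>})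
            + \<delta> * ub * measure \<nu> (R (Suc k)) \<le> ub * measure \<nu> (R k)" for k
      using period_revenue_le[OF \<nu> _ _ valid[of k]] rejects_until_sets_down_closed[of offer k]
      unfolding R_def rejects_until_Suc by simp
    show "measure \<nu> (R 0) = 1"
      unfolding R_def rejects_until_def using \<open>space \<nu> = UNIV\<close> prob_space by simp
  qed (use discount ub_pos in auto)
  then show "(\<integral>\<^sup>+ \<theta>. ennreal (max 0 (disc_first \<delta> (\<lambda>k. accepts (offer k) \<theta>) (\<lambda>k. snd (offer k)))) \<partial>\<nu>)
               \<le> ennreal ub"
    unfolding nn_integral_first_acceptance[OF \<nu>] R_def using discount
    by (intro suminf_le_const) (simp_all add: sum_ennreal ennreal_leI)
qed (use ub_pos in auto)

lemma accepted_price_le: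
  assumes "accepts q \<theta>" "fst q \<in> {xl..xh}"
  shows "snd q \<le> \<delta> * ub + (1 - \<delta>) * util xh \<theta>'"
proof -
  have "util (fst q) \<theta> \<le> util xh \<theta>'"
    using util_le_util_xh[of "fst q" \<theta>] util_mono[of xh \<theta> \<theta>'] assms xl_pos xh_pos
    unfolding accepts_def by auto
  then have "(1 - \<delta>) * util (fst q) \<theta> \<le> (1 - \<delta>) * util xh \<theta>'"
    using discount by (intro mult_left_mono) auto
  then show ?thesis
    using assms unfolding accepts_def by auto
qed

lemma seller_deviation_revenue_le:
  assumes \<nu>: "admissible_belief \<nu>" and s: "seller_valid xl xh s"
  shows "seller_val \<delta> s buyer \<nu> h \<le> ub"
proof -
  interpret \<nu>: prob_space \<nu>
    using \<nu> unfolding admissible_belief_def by simp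
  interpret rnd: prob_space rnd
    by (rule prob_space_rnd)
  interpret pair_prob_space \<nu> rnd
    by unfold_locales
  have sets_\<nu>: "sets \<nu> = sets borel"
    using \<nu> unfolding admissible_belief_def by simp
  define offer where "offer k \<omega> = s (hst s h \<omega> k) (\<omega> k)" for k \<omega>
  have offer_valid: "fst (offer k \<omega>) \<in> {xl..xh}" for k \<omega>
    using s unfolding seller_valid_def valid_offer_def offer_def by blast
  have offer_meas: "(\<lambda>z. offer k (snd z)) \<in> \<nu> \<Otimes>\<^sub>M rnd \<rightarrow>\<^sub>M borel" for k
    unfolding offer_def by (rule measurable_compose[OF measurable_snd measurable_hst_offer[OF s]])
  have "fst \<in> \<nu> \<Otimes>\<^sub>M rnd \<rightarrow>\<^sub>M \<nu>"
    by (rule measurable_fst)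
  then have type_meas: "fst \<in> borel_measurable (\<nu> \<Otimes>\<^sub>M rnd)"
    using measurable_cong_sets[OF refl sets_\<nu>] by blast
  have price_meas: "(\<lambda>z. snd (offer k (snd z))) \<in> borel_measurable (\<nu> \<Otimes>\<^sub>M rnd)" for k
    using measurable_offer_components(2)[OF offer_meas] .
  define \<Phi> where "\<Phi> \<theta> \<omega> = disc_first \<delta> (\<lambda>k. accepts (offer k \<omega>) \<theta>) (\<lambda>k. snd (offer k \<omega>))" for \<theta> \<omega>
  have "seller_val \<delta> s buyer \<nu> h = (\<integral>\<theta>. (\<integral>\<omega>. \<Phi> \<theta> \<omega> \<partial>rnd) \<partial>\<nu>)"
    unfolding seller_val_def \<Phi>_def offer_def buyer_def ..
  also have "\<dots> \<le> ub"
  proof (rule integral_integral_le)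
    show "case_prod \<Phi> \<in> borel_measurable (\<nu> \<Otimes>\<^sub>M rnd)"
      unfolding \<Phi>_def case_prod_beta'
      using pred_accepts[OF offer_meas type_meas] price_meas by (rule borel_measurable_disc_first)
    show "max 0 (\<Phi> \<theta> \<omega>) \<le> \<delta> * ub + (1 - \<delta>) * util xh \<theta>'" for \<theta> \<omega>
      unfolding \<Phi>_def using accepted_price_le offer_valid discount ub_pos util_xh_pos[of \<theta>'] cutoff
      by (intro max_disc_first_le) auto
    show "(\<integral>\<theta>. max 0 (\<Phi> \<theta> \<omega>) \<partial>\<nu>) \<le> ub" for \<omega>
      unfolding \<Phi>_def using offer_valid by (intro deterministic_offers_revenue_le[OF \<nu>])
  qed (use ub_pos in simp)
  finally show ?thesis .
qed

lemma PBE_seller_buyer_belief: "is_PBE v xl xh \<theta>l \<theta>' \<delta> (cond_type_dist \<theta>l \<theta>h f \<theta>') seller buyer belief"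
  unfolding is_PBE_def
proof (intro conjI allI impI)
  show "seller_valid xl xh seller"
    by (rule seller_valid)
  show "{\<theta>. buyer h q \<theta>} \<in> sets borel" for h q
    by (simp add: buyer_def)
  show "prob_space (belief h)" "sets (belief h) = sets borel" "emeasure (belief h) {\<theta>l..\<theta>'} = 1"
    for h
    using admissible_belief[of h] unfolding admissible_belief_def by auto
  show "belief [] = cond_type_dist \<theta>l \<theta>h f \<theta>'"
    by (simp add: belief_def)
  show "belief (h @ [q]) = uniform_measure (belief h) {\<theta>. \<not> buyer h q \<theta>}"
    if "emeasure (belief h) {\<theta>. \<not> buyer h q \<theta>} \<noteq> 0" for h q
    using that by (simp add: belief_def belief_update_def buyer_def)
  show "buyer_val v \<delta> seller c h q \<theta> \<le> buyer_val v \<delta> seller (\<lambda>h' q'. buyer h' q' \<theta>) h q \<theta>"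
    if "valid_offer xl xh q" "\<theta> \<in> {\<theta>l..\<theta>'}" for h q \<theta> c
    using buyer_optimal[OF that] .
  show "seller_val \<delta> s' buyer (belief h) h \<le> seller_val \<delta> seller buyer (belief h) h"
    if "seller_valid xl xh s'" for h s'
    using seller_deviation_revenue_le[OF admissible_belief that] seller_val_seller[OF admissible_belief]
    by simp
qed

end

theorem theorem1:
  fixes v F f :: "real \<Rightarrow> real"
    and \<theta>l \<theta>h xl xh m M \<delta> \<theta>' :: real
  assumes types: "\<theta>l < \<theta>h"
    and quantities: "0 < xl" "xl < xh"
    and A1_concave: "strictly_concave_on {0..xh} v"
    and A1_C1: "C1_on_interval v 0 xh"
    and A1_zero: "v 0 = 0"
    and f_meas: "set_borel_measurable borel {\<theta>l..\<theta>h} f"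
    and F_cdf: "\<forall>\<theta>\<in>{\<theta>l..\<theta>h}. F \<theta> = integral {\<theta>l..\<theta>} f"
    and F_total: "F \<theta>h = 1"
    and A2_bounds: "0 < m" "\<forall>\<theta>\<in>{\<theta>l..\<theta>h}. m \<le> f \<theta> \<and> f \<theta> \<le> M"
    and A2_mono: "strict_mono_on {\<theta>l..\<theta>h} (\<lambda>\<theta>. \<theta> - (1 - F \<theta>) / f \<theta>)"
    and A3: "0 < xe v xh \<theta>l" "xe v xh \<theta>l \<le> xl"
    and A4: "\<forall>\<theta>\<in>{\<theta>l..\<theta>h}.
               0 \<le> v (xe v xh \<theta>) + (\<theta> - (1 - F \<theta>) / f \<theta>) * xe v xh \<theta>"
    and discount: "0 \<le> \<delta>" "\<delta> < 1"
    and cutoff: "\<theta>' \<in> {\<theta>l..\<theta>h}"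
  shows "\<exists>s b \<mu>.
           is_PBE v xl xh \<theta>l \<theta>' \<delta> (cond_type_dist \<theta>l \<theta>h f \<theta>') s b \<mu>
         \<and> (\<forall>r. s [] r = (xh, ubar v xh \<theta>l))
         \<and> (\<forall>\<theta>\<in>{\<theta>l..\<theta>'}. b [] (xh, ubar v xh \<theta>l) \<theta>)
         \<and> seller_val \<delta> s b (\<mu> []) [] = ubar v xh \<theta>l"
proof -
  interpret baseline_game v xh \<theta>l \<theta>h f F m M xl \<delta> \<theta>'
    using assms C1_on_interval_imp_continuous_on[OF A1_C1] by unfold_locales auto
  have "\<forall>\<theta>\<in>{\<theta>l..\<theta>'}. buyer [] (xh, ub) \<theta>"
    using accepts_ub quantities by (simp add: buyer_def)
  moreover have "seller_val \<delta> seller buyer (belief []) [] = ub"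
    by (rule seller_val_seller[OF admissible_belief])
  ultimately show ?thesis
    using PBE_seller_buyer_belief by (intro exI[of _ seller] exI[of _ buyer] exI[of _ belief])
      (simp add: seller_def seller_qty_def)
qed

end
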